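(* Let $\alpha_a$ be a labeled dGL hybrid game, $S$ an inductive Angelic subvalue map for $\alpha_a$, and $\varphi$ a formula compatible with $S$ (i.e. $\models S(\mathsf{end})\rightarrow\varphi$). Then every state satisfying $S(a)$ satisfies $\langle\mathcal{P}(\alpha_a,S)\rangle\varphi$.
   Context: Differential game logic (dGL). Hybrid games are generated by $\alpha,\beta ::= x:=e \mid \alpha;\beta \mid ?Q \mid \{x'=f(x)\,\&\,Q\} \mid \alpha^{*} \mid \alpha\cup\beta \mid x:=* \mid\ !Q \mid \{x'=f(x)\,\&\,Q\}^{d} \mid \alpha^{\times} \mid \alpha\cap\beta \mid x:=\otimes$, with $x$ a real variable (vector for ODEs), $e,f(x)$ polynomial terms, $Q$ a formula. Players Angel and Demon: $x:=e$ deterministic assignment; in $x:=*$ Angel (in $x:=\otimes$ Demon) assigns any real; in $\{x'=f(x)\&Q\}$ Angel (in $\{\cdot\}^d$ Demon) chooses a duration $r\ge 0$ of following the ODE with $Q$ true throughout; $?Q$ makes Angel lose and $!Q$ makes Demon lose if $Q$ is false; in $\alpha\cup\beta$ Angel (in $\alpha\cap\beta$ Demon) chooses the branch; in $\alpha^*$ Angel (in $\alpha^\times$ Demon) decides before each iteration whether to repeat or stop; $\alpha;\beta$ sequential. Formulas: polynomial (in)equalities closed under connectives, real quantifiers, and modalities $\langle\alpha\rangle\varphi$ (Angel can win $\alpha$ reaching $\varphi$) and $[\alpha]\varphi\equiv\neg\langle\alpha\rangle\neg\varphi$, with the standard dGL winning-region semantics ($\langle x:=*\rangle\varphi\leftrightarrow\exists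 x\varphi$, $\langle x:=\otimes\rangle\varphi\leftrightarrow\forall x\varphi$, $\langle ?Q\rangle\varphi\leftrightarrow Q\wedge\varphi$, $\langle !Q\rangle\varphi\leftrightarrow(Q\rightarrow\varphi)$, $\cup$ as disjunction, $\cap$ as conjunction, $\langle\alpha;\beta\rangle\varphi\leftrightarrow\langle\alpha\rangle\langle\beta\rangle\varphi$, Angel ODE existential, Demon ODE universal, $\langle\alpha^*\rangle$ least and $\langle\alpha^\times\rangle$ greatest fixed point). $\models$ denotes validity. Labels: every node of the syntax tree carries a unique label; $\alpha_a$ has root label $a$; $\mathrm{nodes}(\alpha_a)$ is its set of subgame labels; $\mathsf{end}$ is a special extra label. A map $S$ assigns formulas to a label set containing $\mathrm{nodes}(\alpha_a)\cup\{\mathsf{end}\}$; $S\{\mathsf{end}\mapsto Q\}$ replaces the value at $\mathsf{end}$. $\gamma_g,\delta_d$ denote immediate subgames with root labels $g,d$. Existential projection $\mathcal{P}(\alpha_a,S)$: $(x:=* )_a\mapsto(x:=* )_a;?S(\mathsf{end})$; $\{x'=f(x)\&Q\}_a\mapsto\{x'=f(x)\&Q\}_a;?S(\mathsf{end})$; $(\gamma_g\cup\delta_d)_a\mapsto(?S(g);\mathcal{P}(\gamma_g,S))\cup(?S(d);\mathcal{P}(\delta_d,S))$; $((\gamma_g)^* )_a\mapsto(?S(g);\mathcal{P}(\gamma_g,S\{\mathsf{end}\mapsto S(a)\}))^*;?S(\mathsf{end})$; $(\gamma_g;\delta_d)_a\mapsto\mathcal{P}(\gamma_g,S\{\mathsf{end}\mapsto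 S(d)\});\mathcal{P}(\delta_d,S)$; $(\gamma_g\cap\delta_d)_a\mapsto\mathcal{P}(\gamma_g,S)\cap\mathcal{P}(\delta_d,S)$; $((\gamma_g)^\times)_a\mapsto\mathcal{P}(\gamma_g,S\{\mathsf{end}\mapsto S(a)\})^\times$; $x:=e,x:=\otimes,?Q,!Q,\{x'=f(x)\&Q\}^d$ unchanged (labels preserved, new nodes fresh labels). Inductive Angelic subvalue map ($S\Vdash\alpha_a$), recursively: atomic $\alpha$ ($x:=e,x:=*,x:=\otimes,?Q,!Q$, Angel or Demon ODE): $\models S(a)\rightarrow\langle\alpha\rangle S(\mathsf{end})$; $(\gamma_g\cup\delta_d)_a$: $\models S(a)\rightarrow S(g)\vee S(d)$, $S\Vdash\gamma_g$, $S\Vdash\delta_d$; $(\gamma_g\cap\delta_d)_a$: $\models S(a)\rightarrow S(g)\wedge S(d)$ and both; $(\gamma_g;\delta_d)_a$: $\models S(a)\rightarrow S(g)$, $S\{\mathsf{end}\mapsto S(d)\}\Vdash\gamma_g$, $S\Vdash\delta_d$; $((\gamma_g)^* )_a$: $\models S(a)\rightarrow\langle\mathcal{P}(\alpha_a,S)\rangle S(\mathsf{end})$ and $S\{\mathsf{end}\mapsto S(a)\}\Vdash\gamma_g$; $((\gamma_g)^\times)_a$: $\models S(a)\rightarrow S(g)\wedge S(\mathsf{end})$ and $S\{\mathsf{end}\mapsto S(a)\}\Vdash\gamma_g$. *)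

theory Defs
  imports Complex_Main
begin

type_synonym var = nat
type_synonym state = "var \<Rightarrow> real"

text \<open>Game nodes of the input game carry labels \<open>L n\<close>; \<open>End\<close> is the special
  extra label \<open>end\<close>; nodes newly created by the projection carry the label \<open>Fresh\<close>
  (their labels are never consulted).\<close>
datatype label = L nat | End | Fresh

datatype trm = Var var | Const real | Neg trm | Plus trm trm | Times trm trm

type_synonym ode = "(var \<times> trm) list"

datatype fml =
    FTrue | FFalse
  | Eq trm trm | Geq trm trm | Gt trm trm
  | Not fml | And fml fml | Or fml fml | Imp fml fml
  | Exists var fml | Forall var fml
  | Dia game fml | Box game fml
and game =
    Assign label var trm
  | Rand label var
  | DRand label var
  | Test label fml
  | DTest label fml
  | ODE label ode fml
  | DODE label ode fml
  | Choice label game game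
  | DChoice label game game
  | Seq label game game
  | Star label game
  | DStar label game

primrec lab :: "game \<Rightarrow> label" where
  "lab (Assign l x e) = l"
| "lab (Rand l x) = l"
| "lab (DRand l x) = l"
| "lab (Test l Q) = l"
| "lab (DTest l Q) = l"
| "lab (ODE l f Q) = l"
| "lab (DODE l f Q) = l"
| "lab (Choice l a b) = l"
| "lab (DChoice l a b) = l"
| "lab (Seq l a b) = l"
| "lab (Star l a) = l"
| "lab (DStar l a) = l"

primrec nodes :: "game \<Rightarrow> label list" where
  "nodes (Assign l x e) = [l]"
| "nodes (Rand l x) = [l]"
| "nodes (DRand l x) = [l]"
| "nodes (Test l Q) = [l]"
| "nodes (DTest l Q) = [l]"
| "nodes (ODE l f Q) = [l]"
| "nodes (DODE l f Q) = [l]"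
| "nodes (Choice l a b) = l # nodes a @ nodes b"
| "nodes (DChoice l a b) = l # nodes a @ nodes b"
| "nodes (Seq l a b) = l # nodes a @ nodes b"
| "nodes (Star l a) = l # nodes a"
| "nodes (DStar l a) = l # nodes a"

definition well_labelled :: "game \<Rightarrow> bool" where
  "well_labelled \<alpha> \<longleftrightarrow> distinct (nodes \<alpha>) \<and> (\<forall>l\<in>set (nodes \<alpha>). \<exists>n. l = L n)"

primrec tsem :: "trm \<Rightarrow> state \<Rightarrow> real" where
  "tsem (Var x) \<omega> = \<omega> x"
| "tsem (Const c) \<omega> = c"
| "tsem (Neg e) \<omega> = - tsem e \<omega>"
| "tsem (Plus e1 e2) \<omega> = tsem e1 \<omega> + tsem e2 \<omega>"
| "tsem (Times e1 e2) \<omega> = tsem e1 \<omega> * tsem e2 \<omega>"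

definition ode_sol :: "ode \<Rightarrow> state set \<Rightarrow> state \<Rightarrow> real \<Rightarrow> (real \<Rightarrow> state) \<Rightarrow> bool" where
  "ode_sol f Q \<omega> r sol \<longleftrightarrow> 0 \<le> r \<and> sol 0 = \<omega> \<and>
     (\<forall>t\<in>{0..r}.
        sol t \<in> Q
      \<and> (\<forall>y. y \<notin> fst ` set f \<longrightarrow> sol t y = \<omega> y)
      \<and> (\<forall>(x, e)\<in>set f. ((\<lambda>s. sol s x) has_real_derivative tsem e (sol t)) (at t within {0..r})))"

primrec fml_sem :: "fml \<Rightarrow> state set"
  and game_sem :: "game \<Rightarrow> state set \<Rightarrow> state set" where
  "fml_sem FTrue = UNIV"
| "fml_sem FFalse = {}"
| "fml_sem (Eq e1 e2) = {\<omega>. tsem e1 \<omega> = tsem e2 \<omega>}"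
| "fml_sem (Geq e1 e2) = {\<omega>. tsem e1 \<omega> \<ge> tsem e2 \<omega>}"
| "fml_sem (Gt e1 e2) = {\<omega>. tsem e1 \<omega> > tsem e2 \<omega>}"
| "fml_sem (Not p) = - fml_sem p"
| "fml_sem (And p q) = fml_sem p \<inter> fml_sem q"
| "fml_sem (Or p q) = fml_sem p \<union> fml_sem q"
| "fml_sem (Imp p q) = - fml_sem p \<union> fml_sem q"
| "fml_sem (Exists x p) = {\<omega>. \<exists>v. \<omega>(x := v) \<in> fml_sem p}"
| "fml_sem (Forall x p) = {\<omega>. \<forall>v. \<omega>(x := v) \<in> fml_sem p}"
| "fml_sem (Dia a p) = game_sem a (fml_sem p)"
| "fml_sem (Box a p) = - game_sem a (- fml_sem p)"
| "game_sem (Assign l x e) X = {\<omega>. \<omega>(x := tsem e \<omega>) \<in> X}"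
| "game_sem (Rand l x) X = {\<omega>. \<exists>v. \<omega>(x := v) \<in> X}"
| "game_sem (DRand l x) X = {\<omega>. \<forall>v. \<omega>(x := v) \<in> X}"
| "game_sem (Test l Q) X = fml_sem Q \<inter> X"
| "game_sem (DTest l Q) X = - fml_sem Q \<union> X"
| "game_sem (ODE l f Q) X =
     {\<omega>. \<exists>r sol. ode_sol f (fml_sem Q) \<omega> r sol \<and> sol r \<in> X}"
| "game_sem (DODE l f Q) X =
     {\<omega>. \<forall>r sol. ode_sol f (fml_sem Q) \<omega> r sol \<longrightarrow> sol r \<in> X}"
| "game_sem (Choice l a b) X = game_sem a X \<union> game_sem b X"
| "game_sem (DChoice l a b) X = game_sem a X \<inter> game_sem b X"
| "game_sem (Seq l a b) X = game_sem a (game_sem b X)"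
| "game_sem (Star l a) X = lfp (\<lambda>Z. X \<union> game_sem a Z)"
| "game_sem (DStar l a) X = gfp (\<lambda>Z. X \<inter> game_sem a Z)"

definition valid :: "fml \<Rightarrow> bool" where
  "valid p \<longleftrightarrow> (\<forall>\<omega>. \<omega> \<in> fml_sem p)"

type_synonym smap = "label \<Rightarrow> fml"

primrec proj :: "game \<Rightarrow> smap \<Rightarrow> game" where
  "proj (Assign l x e) S = Assign l x e"
| "proj (Rand l x) S = Seq Fresh (Rand l x) (Test Fresh (S End))"
| "proj (DRand l x) S = DRand l x"
| "proj (Test l Q) S = Test l Q"
| "proj (DTest l Q) S = DTest l Q"
| "proj (ODE l f Q) S = Seq Fresh (ODE l f Q) (Test Fresh (S End))"
| "proj (DODE l f Q) S = DODE l f Q"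
| "proj (Choice l g d) S =
     Choice l (Seq Fresh (Test Fresh (S (lab g))) (proj g S))
              (Seq Fresh (Test Fresh (S (lab d))) (proj d S))"
| "proj (DChoice l g d) S = DChoice l (proj g S) (proj d S)"
| "proj (Seq l g d) S = Seq l (proj g (S(End := S (lab d)))) (proj d S)"
| "proj (Star l g) S =
     Seq Fresh (Star l (Seq Fresh (Test Fresh (S (lab g))) (proj g (S(End := S l)))))
               (Test Fresh (S End))"
| "proj (DStar l g) S = DStar l (proj g (S(End := S l)))"

primrec subval :: "smap \<Rightarrow> game \<Rightarrow> bool" where
  "subval S (Assign l x e) = valid (Imp (S l) (Dia (Assign l x e) (S End)))"
| "subval S (Rand l x) = valid (Imp (S l) (Dia (Rand l x) (S End)))"
| "subval S (DRand l x) = valid (Imp (S l) (Dia (DRand l x) (S End)))"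
| "subval S (Test l Q) = valid (Imp (S l) (Dia (Test l Q) (S End)))"
| "subval S (DTest l Q) = valid (Imp (S l) (Dia (DTest l Q) (S End)))"
| "subval S (ODE l f Q) = valid (Imp (S l) (Dia (ODE l f Q) (S End)))"
| "subval S (DODE l f Q) = valid (Imp (S l) (Dia (DODE l f Q) (S End)))"
| "subval S (Choice l g d) =
     (valid (Imp (S l) (Or (S (lab g)) (S (lab d)))) \<and> subval S g \<and> subval S d)"
| "subval S (DChoice l g d) =
     (valid (Imp (S l) (And (S (lab g)) (S (lab d)))) \<and> subval S g \<and> subval S d)"
| "subval S (Seq l g d) =
     (valid (Imp (S l) (S (lab g))) \<and> subval (S(End := S (lab d))) g \<and> subval S d)"
| "subval S (Star l g) =
     (valid (Imp (S l) (Dia (proj (Star l g) S) (S End))) \<and> subval (S(End := S l)) g)"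
| "subval S (DStar l g) =
     (valid (Imp (S l) (And (S (lab g)) (S End))) \<and> subval (S(End := S l)) g)"

end

(* In the projected game every choice of Angel is guarded by a test of S at the chosen
   node and each of her atomic moves is followed by a test of S(end), so S at a node entails that
   Angel wins the projected subgame towards any postcondition implied by S(end).  An Angel loop
   needs no induction hypothesis, since this winning property is part of the definition of a
   subvalue map; for a Demon loop, S(a) entails S(g) and S(end), so the region of S(a) is a
   post-fixed point and lies below the greatest fixed point. *)
theory Submission
  imports Defs
begin

lemmas game_induct = game.induct[where ?P1.0 = "\<lambda>_. True", simplified,
  case_names Assign Rand DRand Test DTest ODE DODE Choice DChoice Seq Star DStar]

lemma game_sem_mono: "X \<subseteq> Y \<Longrightarrow> game_sem \<alpha> X \<subseteq> game_sem \<alpha> Y"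
proof (induction \<alpha> arbitrary: X Y rule: game_induct)
  case (Star l \<gamma>)
  then show ?case by (simp, intro lfp_mono, blast)
next
  case (DStar l \<gamma>)
  then show ?case by (simp, intro gfp_mono, blast)
qed (simp; blast)+

lemma valid_Imp_iff: "valid (Imp p q) \<longleftrightarrow> fml_sem p \<subseteq> fml_sem q"
  by (auto simp: valid_def)

lemma lab_neq_End: "End \<notin> set (nodes \<alpha>) \<Longrightarrow> lab \<alpha> \<noteq> End"
  by (cases \<alpha>) auto

lemma well_labelled_End_notin_nodes: "well_labelled \<alpha> \<Longrightarrow> End \<notin> set (nodes \<alpha>)"
  by (auto simp: well_labelled_def)

lemma proj_sound:
  assumes "End \<notin> set (nodes \<alpha>)" and "subval S \<alpha>" and "fml_sem (S End) \<subseteq> X"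
  shows "fml_sem (S (lab \<alpha>)) \<subseteq> game_sem (proj \<alpha> S) X"
  using assms
proof (induction \<alpha> arbitrary: S X rule: game_induct)
  case (Rand l x)
  then have "fml_sem (S End) \<inter> X = fml_sem (S End)" by blast
  with Rand show ?case by (simp add: valid_Imp_iff)
next
  case (ODE l f Q)
  then have "fml_sem (S End) \<inter> X = fml_sem (S End)" by blast
  with ODE show ?case by (simp add: valid_Imp_iff)
next
  case (Choice l \<gamma> \<delta>)
  have "fml_sem (S (lab \<gamma>)) \<subseteq> game_sem (proj \<gamma> S) X"
    and "fml_sem (S (lab \<delta>)) \<subseteq> game_sem (proj \<delta> S) X"
    using Choice by simp_all
  with Choice.prems(2) show ?case by (auto simp: valid_Imp_iff)
next
  case (DChoice l \<gamma> \<delta>)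
  have "fml_sem (S (lab \<gamma>)) \<subseteq> game_sem (proj \<gamma> S) X"
    and "fml_sem (S (lab \<delta>)) \<subseteq> game_sem (proj \<delta> S) X"
    using DChoice by simp_all
  with DChoice.prems(2) show ?case by (auto simp: valid_Imp_iff)
next
  case (Seq l \<gamma> \<delta>)
  have sub_\<gamma>: "subval (S(End := S (lab \<delta>))) \<gamma>"
    using Seq.prems(2) by simp
  have win_\<delta>: "fml_sem (S (lab \<delta>)) \<subseteq> game_sem (proj \<delta> S) X"
    using Seq by simp
  have "fml_sem ((S(End := S (lab \<delta>))) (lab \<gamma>))
      \<subseteq> game_sem (proj \<gamma> (S(End := S (lab \<delta>)))) (game_sem (proj \<delta> S) X)"
    by (rule Seq.IH(1)[OF _ sub_\<gamma>]) (use Seq.prems(1) win_\<delta> in simp_all)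
  moreover have "lab \<gamma> \<noteq> End"
    using Seq.prems(1) by (simp add: lab_neq_End)
  ultimately show ?case
    using Seq.prems(2) by (auto simp: valid_Imp_iff)
next
  case (Star l \<gamma>)
  have "fml_sem (S l) \<subseteq> game_sem (proj (Star l \<gamma>) S) (fml_sem (S End))"
    using Star.prems(2) by (simp only: subval.simps valid_Imp_iff fml_sem.simps)
  also have "\<dots> \<subseteq> game_sem (proj (Star l \<gamma>) S) X"
    using Star.prems(3) by (rule game_sem_mono)
  finally show ?case by (simp only: lab.simps)
next
  case (DStar l \<gamma>)
  have sub_\<gamma>: "subval (S(End := S l)) \<gamma>"
    using DStar.prems(2) by simp
  have "fml_sem ((S(End := S l)) (lab \<gamma>))
      \<subseteq> game_sem (proj \<gamma> (S(End := S l))) (fml_sem (S l))"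
    by (rule DStar.IH[OF _ sub_\<gamma>]) (use DStar.prems(1) in simp_all)
  moreover have "lab \<gamma> \<noteq> End"
    using DStar.prems(1) by (simp add: lab_neq_End)
  ultimately have "fml_sem (S l) \<subseteq> X \<inter> game_sem (proj \<gamma> (S(End := S l))) (fml_sem (S l))"
    using DStar.prems(2,3) by (auto simp: valid_Imp_iff)
  then have "fml_sem (S l) \<subseteq> gfp (\<lambda>Z. X \<inter> game_sem (proj \<gamma> (S(End := S l))) Z)"
    by (rule gfp_upperbound)
  then show ?case by simp
qed (auto simp: valid_Imp_iff)

theorem mainTheorem9:
  fixes \<alpha> :: game and S :: smap and \<phi> :: fml and \<omega> :: state
  assumes "well_labelled \<alpha>"
    and "subval S \<alpha>"
    and "valid (Imp (S End) \<phi>)"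
    and "\<omega> \<in> fml_sem (S (lab \<alpha>))"
  shows "\<omega> \<in> fml_sem (Dia (proj \<alpha> S) \<phi>)"
proof -
  have "fml_sem (S (lab \<alpha>)) \<subseteq> game_sem (proj \<alpha> S) (fml_sem \<phi>)"
    using well_labelled_End_notin_nodes[OF assms(1)] assms(2,3)
    by (simp add: proj_sound valid_Imp_iff)
  with assms(4) show ?thesis by auto
qed

end
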